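(* For every $n\ge 4$, the pendant path graph $P_n^*$ is not $n$-EKR.
   Context: An independent $r$-set of a graph $G$ is a set of $r$ pairwise non-adjacent vertices; $\mathcal{I}^{(r)}(G)$ is the family of all independent $r$-sets, and $\mathcal{I}^{(r)}_v(G)$ the subfamily of those containing $v$ (the $r$-star centred at $v$). A family is intersecting if every two members have nonempty intersection. $G$ is $r$-EKR if some $r$-star $\mathcal{I}^{(r)}_v(G)$ has size equal to the maximum size of an intersecting subfamily of $\mathcal{I}^{(r)}(G)$. For a graph $G$ with vertices $x_1,\dots,x_n$, the pendant graph $G^*$ has vertex set $\{x_1,\dots,x_n\}\sqcup\{p_1,\dots,p_n\}$ and edge set $E(G)\sqcup\{x_1p_1,\dots,x_np_n\}$. $P_n$ is the path with vertices $x_1,\dots,x_n$ and edges $x_jx_{j+1}$, and $P_n^*$ its pendant graph. *)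

theory Defs
  imports Main
begin

definition indep_sets :: "'a set \<Rightarrow> ('a \<Rightarrow> 'a \<Rightarrow> bool) \<Rightarrow> nat \<Rightarrow> 'a set set" where
  "indep_sets V adj r =
     {A. A \<subseteq> V \<and> finite A \<and> card A = r \<and> (\<forall>x\<in>A. \<forall>y\<in>A. x \<noteq> y \<longrightarrow> \<not> adj x y)}"

definition star :: "'a set \<Rightarrow> ('a \<Rightarrow> 'a \<Rightarrow> bool) \<Rightarrow> nat \<Rightarrow> 'a \<Rightarrow> 'a set set" where
  "star V adj r v = {A \<in> indep_sets V adj r. v \<in> A}"

definition intersecting :: "'a set set \<Rightarrow> bool" where
  "intersecting F \<longleftrightarrow> (\<forall>A\<in>F. \<forall>B\<in>F. A \<inter> B \<noteq> {})"

definition max_intersecting :: "'a set \<Rightarrow> ('a \<Rightarrow> 'a \<Rightarrow> bool) \<Rightarrow> nat \<Rightarrow> nat" where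
  "max_intersecting V adj r =
     Max {card F | F. F \<subseteq> indep_sets V adj r \<and> intersecting F}"

definition EKR :: "'a set \<Rightarrow> ('a \<Rightarrow> 'a \<Rightarrow> bool) \<Rightarrow> nat \<Rightarrow> bool" where
  "EKR V adj r \<longleftrightarrow> (\<exists>v\<in>V. card (star V adj r v) = max_intersecting V adj r)"

text \<open>Pendant graph: x_i is Inl x_i, the pendant vertex p_i is Inr x_i.\<close>

definition pendant_vertices :: "'a set \<Rightarrow> ('a + 'a) set" where
  "pendant_vertices V = Inl ` V \<union> Inr ` V"

fun pendant_adj :: "('a \<Rightarrow> 'a \<Rightarrow> bool) \<Rightarrow> 'a + 'a \<Rightarrow> 'a + 'a \<Rightarrow> bool" where
  "pendant_adj adj (Inl x) (Inl y) = adj x y"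
| "pendant_adj adj (Inl x) (Inr y) = (x = y)"
| "pendant_adj adj (Inr x) (Inl y) = (x = y)"
| "pendant_adj adj (Inr x) (Inr y) = False"

definition path_vertices :: "nat \<Rightarrow> nat set" where
  "path_vertices n = {1..n}"

definition path_adj :: "nat \<Rightarrow> nat \<Rightarrow> bool" where
  "path_adj i j \<longleftrightarrow> j = i + 1 \<or> i = j + 1"

end

theory Submission
  imports Defs
begin

text \<open>In a graph on \<open>2r\<close> vertices, the only \<open>r\<close>-set disjoint from an independent \<open>r\<close>-set \<open>S\<close>
is its complement. So if the complement of \<open>S\<close> contains an edge, every independent \<open>r\<close>-set
meets \<open>S\<close>, and adding \<open>S\<close> to an \<open>r\<close>-star not containing it keeps the family intersecting.
In the pendant graph of a graph on \<open>V\<close> (with \<open>r = |V|\<close>) such an \<open>S\<close> exists for every centre: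
the pendant vertices for a centre \<open>x\<^sub>i\<close>, and \<open>x\<^sub>i\<close> together with the other pendant vertices for
a centre \<open>p\<^sub>i\<close>. The complement then contains an edge of \<open>G - x\<^sub>i\<close>, which for the path with
\<open>n \<ge> 4\<close> always exists.\<close>

lemma finite_indep_sets: "finite V \<Longrightarrow> finite (indep_sets V adj r)"
  by (rule finite_subset[of _ "Pow V"]) (auto simp: indep_sets_def)

lemma card_le_max_intersecting:
  assumes "finite V" and "F \<subseteq> indep_sets V adj r" and "intersecting F"
  shows "card F \<le> max_intersecting V adj r"
proof -
  have "{card F | F. F \<subseteq> indep_sets V adj r \<and> intersecting F} \<subseteq> card ` Pow (indep_sets V adj r)"
    by auto
  then have "finite {card F | F. F \<subseteq> indep_sets V adj r \<and> intersecting F}"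
    using finite_indep_sets[OF assms(1)] finite_subset by blast
  then show ?thesis
    unfolding max_intersecting_def by (rule Max_ge) (use assms(2,3) in blast)
qed

lemma indep_set_disjoint_eq_complement:
  assumes "finite V" and "card V = 2 * r"
    and "S \<in> indep_sets V adj r" and "A \<in> indep_sets V adj r" and "A \<inter> S = {}"
  shows "A = V - S"
proof -
  have "A \<subseteq> V - S" using assms(4,5) by (auto simp: indep_sets_def)
  moreover have "card A = card (V - S)"
    using assms by (simp add: indep_sets_def card_Diff_subset)
  ultimately show ?thesis using assms(1) by (simp add: card_subset_eq)
qed

lemma intersecting_insert_star:
  assumes "finite V" and "card V = 2 * r" and S: "S \<in> indep_sets V adj r"
    and "a \<in> V - S" and "b \<in> V - S" and "a \<noteq> b" and "adj a b"
  shows "intersecting (insert S (star V adj r v))"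
proof -
  have meets_S: "A \<inter> S \<noteq> {}" if "A \<in> indep_sets V adj r" for A
  proof
    assume "A \<inter> S = {}"
    then have "A = V - S"
      using indep_set_disjoint_eq_complement[OF assms(1,2) S that] by blast
    then show False using that assms(4-7) by (auto simp: indep_sets_def)
  qed
  have "S \<noteq> {}" using meets_S[OF S] by blast
  then show ?thesis
    using meets_S S by (auto simp: intersecting_def star_def)
qed

lemma card_star_less_max_intersecting:
  assumes "finite V" and "card V = 2 * r" and S: "S \<in> indep_sets V adj r" and "v \<notin> S"
    and "a \<in> V - S" and "b \<in> V - S" and "a \<noteq> b" and "adj a b"
  shows "card (star V adj r v) < max_intersecting V adj r"
proof -
  have "finite (star V adj r v)"
    using finite_indep_sets[OF assms(1)] by (rule rev_finite_subset) (auto simp: star_def)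
  moreover have "S \<notin> star V adj r v" using \<open>v \<notin> S\<close> by (simp add: star_def)
  ultimately have "card (star V adj r v) < card (insert S (star V adj r v))" by simp
  also have "\<dots> \<le> max_intersecting V adj r"
    using S intersecting_insert_star[OF assms(1,2) S assms(5-8)]
    by (intro card_le_max_intersecting[OF assms(1)]) (auto simp: star_def)
  finally show ?thesis .
qed

lemma card_pendant_vertices: "finite V \<Longrightarrow> card (pendant_vertices V) = 2 * card V"
  unfolding pendant_vertices_def
  by (subst card_Un_disjoint) (auto simp: card_image)

lemma pendant_not_EKR:
  assumes fin: "finite V"
    and edge: "\<And>i. i \<in> V \<Longrightarrow> \<exists>a b. a \<in> V - {i} \<and> b \<in> V - {i} \<and> a \<noteq> b \<and> adj a b"
  shows "\<not> EKR (pendant_vertices V) (pendant_adj adj) (card V)"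
proof
  let ?V = "pendant_vertices V" and ?r = "card V"
  have finV: "finite ?V" using fin by (simp add: pendant_vertices_def)
  have cardV: "card ?V = 2 * ?r" using fin by (rule card_pendant_vertices)
  assume "EKR ?V (pendant_adj adj) ?r"
  then obtain v where v: "v \<in> ?V"
    and eq: "card (star ?V (pendant_adj adj) ?r v) = max_intersecting ?V (pendant_adj adj) ?r"
    unfolding EKR_def by blast
  obtain i where i: "i \<in> V" and "v = Inl i \<or> v = Inr i"
    using v by (auto simp: pendant_vertices_def)
  then consider "v = Inl i" | "v = Inr i" by blast
  then show False
  proof cases
    case 1
    obtain a b where "a \<in> V" "b \<in> V" "a \<noteq> b" "adj a b" using edge[OF i] by blast
    moreover have S: "Inr ` V \<in> indep_sets ?V (pendant_adj adj) ?r"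
      by (auto simp: indep_sets_def pendant_vertices_def card_image fin)
    ultimately have "card (star ?V (pendant_adj adj) ?r v) < max_intersecting ?V (pendant_adj adj) ?r"
      using 1 by (intro card_star_less_max_intersecting[OF finV cardV S, where a = "Inl a" and b = "Inl b"])
        (auto simp: pendant_vertices_def)
    then show False using eq by simp
  next
    case 2
    obtain a b where "a \<in> V - {i}" "b \<in> V - {i}" "a \<noteq> b" "adj a b" using edge[OF i] by blast
    moreover
    let ?S = "insert (Inl i) (Inr ` (V - {i}))"
    have "card ?S = ?r"
      using fin i by (simp add: card_image card_insert_disjoint image_iff card_Diff_singleton)
        (metis Suc_pred card_gt_0_iff empty_iff)
    then have S: "?S \<in> indep_sets ?V (pendant_adj adj) ?r"
      using fin i by (auto simp: indep_sets_def pendant_vertices_def)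
    ultimately have "card (star ?V (pendant_adj adj) ?r v) < max_intersecting ?V (pendant_adj adj) ?r"
      using 2 by (intro card_star_less_max_intersecting[OF finV cardV S, where a = "Inl a" and b = "Inl b"])
        (auto simp: pendant_vertices_def)
    then show False using eq by simp
  qed
qed

lemma path_edge_avoiding:
  assumes "n \<ge> 4" and "i \<in> path_vertices n"
  shows "\<exists>a b. a \<in> path_vertices n - {i} \<and> b \<in> path_vertices n - {i} \<and> a \<noteq> b \<and> path_adj a b"
proof (cases "i \<le> 2")
  case True
  then show ?thesis using assms by (intro exI[of _ 3] exI[of _ 4]) (auto simp: path_vertices_def path_adj_def)
next
  case False
  then show ?thesis using assms by (intro exI[of _ 1] exI[of _ 2]) (auto simp: path_vertices_def path_adj_def)
qed

theorem lemma9: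
  fixes n :: nat
  assumes "n \<ge> 4"
  shows "\<not> EKR (pendant_vertices (path_vertices n)) (pendant_adj path_adj) n"
proof -
  have "\<not> EKR (pendant_vertices (path_vertices n)) (pendant_adj path_adj) (card (path_vertices n))"
    using path_edge_avoiding[OF assms] by (intro pendant_not_EKR) (auto simp: path_vertices_def)
  then show ?thesis by (simp add: path_vertices_def)
qed

end
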